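(* Let $\Gamma$ be a finitely generated abelian group, $\mathcal{A}$ a finite list of elements of $\Gamma$, and $G=\mathbb{S}^1$ or $G=\mathbb{C}^\times$. Fix $k\in\mathbb{Z}_{>0}$. Then for every sublist $\mathcal{S}\subseteq\mathcal{A}$, $$\#\big(\mathrm{cc}(H_{\mathcal{S},G})\cap L[k]\big)=m(\mathcal{S};\mathbb{Z}/k\mathbb{Z}).$$
   Context: $G$ is written multiplicatively; $T=\operatorname{Hom}(\Gamma,G)$ with identity element $\mathbf{1}$. For $\alpha\in\mathcal{A}$, $H_{\alpha,G}=\{\varphi\in T\mid\varphi(\alpha)=1\}$; for $\mathcal{S}\subseteq\mathcal{A}$, $H_{\mathcal{S},G}=\bigcap_{\alpha\in\mathcal{S}}H_{\alpha,G}$ ($H_{\emptyset,G}=T$). $\mathrm{cc}(X)$ denotes the set of connected components of $X$. $L$ is the set of connected components of all nonempty $H_{\mathcal{S},G}$, $\mathcal{S}\subseteq\mathcal{A}$. For $k\in\mathbb{Z}$, $E_k:T\to T$, $\varphi\mapsto\varphi^k$, and $L[k]=\{\mathcal{C}\in L\mid\mathbf{1}\in E_k(\mathcal{C})\}$. $m(\mathcal{S};\mathbb{Z}/k\mathbb{Z})=\#\operatorname{Hom}\big((\Gamma/\langle\mathcal{S}\rangle)_{\operatorname{tor}},\mathbb{Z}/k\mathbb{Z}\big)$, where $\langle\mathcal{S}\rangle$ is the subgroup generated by $\mathcal{S}$ and $(\cdot)_{\operatorname{tor}}$ denotes the torsion subgroup. *)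

theory Defs
  imports "HOL-Analysis.Analysis" "HOL-Algebra.Algebra"
begin

definition fin_gen_group :: "('a, 'b) monoid_scheme \<Rightarrow> bool" where
  "fin_gen_group \<Gamma> \<longleftrightarrow> (\<exists>F. finite F \<and> F \<subseteq> carrier \<Gamma> \<and> generate \<Gamma> F = carrier \<Gamma>)"

(* T = Hom(Gamma, G), G given as a subgroup Gs of the multiplicative group of complex numbers
   (S^1 = sphere 0 1 or C^x = - {0}).  Homomorphisms are extensional (undefined off the carrier)
   and T carries the topology of pointwise convergence (product topology on 'a \<Rightarrow> complex). *)
definition homT :: "('a, 'b) monoid_scheme \<Rightarrow> complex set \<Rightarrow> ('a \<Rightarrow> complex) set" where
  "homT \<Gamma> Gs = {\<phi>. \<phi> \<in> extensional (carrier \<Gamma>) \<and> (\<forall>x\<in>carrier \<Gamma>. \<phi> x \<in> Gs) \<and>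
      (\<forall>x\<in>carrier \<Gamma>. \<forall>y\<in>carrier \<Gamma>. \<phi> (x \<otimes>\<^bsub>\<Gamma>\<^esub> y) = \<phi> x * \<phi> y)}"

definition oneT :: "('a, 'b) monoid_scheme \<Rightarrow> 'a \<Rightarrow> complex" where
  "oneT \<Gamma> = (\<lambda>x\<in>carrier \<Gamma>. 1)"

definition Hset :: "('a, 'b) monoid_scheme \<Rightarrow> complex set \<Rightarrow> 'a set \<Rightarrow> ('a \<Rightarrow> complex) set" where
  "Hset \<Gamma> Gs S = {\<phi> \<in> homT \<Gamma> Gs. \<forall>\<alpha>\<in>S. \<phi> \<alpha> = 1}"

definition ccomp :: "'t::topological_space set \<Rightarrow> 't set set" where
  "ccomp Y = connected_component_set Y ` Y"

definition Ek :: "('a, 'b) monoid_scheme \<Rightarrow> int \<Rightarrow> ('a \<Rightarrow> complex) \<Rightarrow> ('a \<Rightarrow> complex)" where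
  "Ek \<Gamma> k \<phi> = (\<lambda>x\<in>carrier \<Gamma>. \<phi> x powi k)"

definition Lset :: "('a, 'b) monoid_scheme \<Rightarrow> complex set \<Rightarrow> 'a list \<Rightarrow> ('a \<Rightarrow> complex) set set" where
  "Lset \<Gamma> Gs A = \<Union>{ccomp (Hset \<Gamma> Gs S) | S. S \<subseteq> set A \<and> Hset \<Gamma> Gs S \<noteq> {}}"

definition Lk :: "('a, 'b) monoid_scheme \<Rightarrow> complex set \<Rightarrow> 'a list \<Rightarrow> int \<Rightarrow> ('a \<Rightarrow> complex) set set" where
  "Lk \<Gamma> Gs A k = {C \<in> Lset \<Gamma> Gs A. oneT \<Gamma> \<in> Ek \<Gamma> k ` C}"

definition tor_group :: "('c, 'd) monoid_scheme \<Rightarrow> ('c, 'd) monoid_scheme" where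
  "tor_group Q = subgroup_generated Q {x \<in> carrier Q. \<exists>n::nat. n > 0 \<and> x [^]\<^bsub>Q\<^esub> n = \<one>\<^bsub>Q\<^esub>}"

definition mult_S :: "('a, 'b) monoid_scheme \<Rightarrow> 'a set \<Rightarrow> nat \<Rightarrow> nat" where
  "mult_S \<Gamma> S k = card (hom (tor_group (\<Gamma> Mod generate \<Gamma> S)) (integer_mod_group k)
        \<inter> extensional (carrier (tor_group (\<Gamma> Mod generate \<Gamma> S))))"

end

theory Submission
  imports Defs
begin

text \<open>Let \<open>N = \<langle>S\<rangle>\<close> and let \<open>sat\<close> be the set of \<open>x\<close> with \<open>x\<^sup>n \<in> N\<close> for some
  \<open>n > 0\<close>, so that \<open>sat/N\<close> is the torsion subgroup of \<open>\<Gamma>/N\<close> and \<open>\<Gamma>/sat\<close> is finitely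
  generated, torsion-free and hence free.
  Evaluation at a point of \<open>sat\<close> takes only finitely many values (roots of unity) on
  \<open>H\<^sub>S\<close> and is continuous, so it is constant on every component. Conversely, two
  characters in \<open>H\<^sub>S\<close> that agree on \<open>sat\<close> are joined by the path \<open>u \<mapsto> \<psi> exp (u z)\<close>,
  where \<open>z\<close> is the additive map defined by logarithms on a basis of \<open>\<Gamma>/sat\<close>.
  So a component is determined by the common restriction of its points to \<open>sat\<close>, and it
  contains a point of order dividing \<open>k\<close> iff this restriction comes from a homomorphism
  \<open>(\<Gamma>/N)\<^sub>t\<^sub>o\<^sub>r \<rightarrow> \<int>/k\<int>\<close>; every such homomorphism is realised, by composing with
  the retraction \<open>\<Gamma> \<rightarrow> sat\<close> that the basis provides.\<close>

section \<open>Subgroups of \<open>\<int>\<^sup>I\<close> are free\<close>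

definition int_fun_subgroup :: "('i \<Rightarrow> int) set \<Rightarrow> bool" where
  "int_fun_subgroup K \<longleftrightarrow>
     (\<lambda>i. 0) \<in> K \<and> (\<forall>v\<in>K. \<forall>w\<in>K. (\<lambda>i. v i + w i) \<in> K) \<and> (\<forall>v\<in>K. (\<lambda>i. - v i) \<in> K)"

definition int_basis :: "('i \<Rightarrow> int) set \<Rightarrow> (nat \<Rightarrow> 'i \<Rightarrow> int) \<Rightarrow> nat \<Rightarrow> bool" where
  "int_basis K b s \<longleftrightarrow> (\<forall>j<s. b j \<in> K) \<and>
     (\<forall>v\<in>K. \<exists>c. v = (\<lambda>i. \<Sum>j<s. c j * b j i)) \<and>
     (\<forall>c. (\<lambda>i. \<Sum>j<s. c j * b j i) = (\<lambda>i. 0) \<longrightarrow> (\<forall>j<s. c j = 0))"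

lemma int_fun_subgroup_zero: "int_fun_subgroup K \<Longrightarrow> (\<lambda>i. 0) \<in> K"
  and int_fun_subgroup_add: "int_fun_subgroup K \<Longrightarrow> v \<in> K \<Longrightarrow> w \<in> K \<Longrightarrow> (\<lambda>i. v i + w i) \<in> K"
  and int_fun_subgroup_uminus: "int_fun_subgroup K \<Longrightarrow> v \<in> K \<Longrightarrow> (\<lambda>i. - v i) \<in> K"
  by (simp_all add: int_fun_subgroup_def)

lemma int_fun_subgroup_diff:
  assumes "int_fun_subgroup K" "v \<in> K" "w \<in> K"
  shows "(\<lambda>i. v i - w i) \<in> K"
  using int_fun_subgroup_add[OF assms(1,2) int_fun_subgroup_uminus[OF assms(1,3)]] by simp

lemma int_fun_subgroup_mult:
  assumes K: "int_fun_subgroup K" and v: "v \<in> K"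
  shows "(\<lambda>i. q * v i) \<in> K"
proof -
  have nat_mult: "(\<lambda>i. int n * v i) \<in> K" for n
  proof (induction n)
    case 0
    then show ?case using int_fun_subgroup_zero[OF K] by simp
  next
    case (Suc n)
    then show ?case using int_fun_subgroup_add[OF K v Suc] by (simp add: algebra_simps)
  qed
  show ?thesis
  proof (cases "q \<ge> 0")
    case True
    then show ?thesis using nat_mult[of "nat q"] by simp
  next
    case False
    then show ?thesis using int_fun_subgroup_uminus[OF K nat_mult[of "nat (- q)"]] by simp
  qed
qed

lemma int_fun_subgroup_coordinate_generator:
  assumes K: "int_fun_subgroup K" and v: "v \<in> K" "v a \<noteq> 0"
  obtains u where "u \<in> K" "u a > 0" "\<And>w. w \<in> K \<Longrightarrow> u a dvd w a"
proof -
  define d where "d = (LEAST n::nat. n > 0 \<and> (\<exists>w\<in>K. w a = int n))"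
  have "\<exists>w\<in>K. w a = \<bar>v a\<bar>"
    using v int_fun_subgroup_uminus[OF K v(1)] by (cases "v a \<ge> 0") auto
  then have "\<exists>n::nat. n > 0 \<and> (\<exists>w\<in>K. w a = int n)"
    using v(2) by (intro exI[of _ "nat \<bar>v a\<bar>"]) auto
  then have d: "d > 0 \<and> (\<exists>w\<in>K. w a = int d)"
    unfolding d_def by (rule LeastI_ex)
  have least: "\<And>n::nat. n > 0 \<Longrightarrow> \<exists>w\<in>K. w a = int n \<Longrightarrow> d \<le> n"
    unfolding d_def by (rule Least_le) blast
  from d obtain u where u: "u \<in> K" "u a = int d" by blast
  have "u a dvd w a" if w: "w \<in> K" for w
  proof -
    define r where "r = (\<lambda>i. w i - (w a div u a) * u i)"
    have r: "r \<in> K"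
      unfolding r_def by (rule int_fun_subgroup_diff[OF K w int_fun_subgroup_mult[OF K u(1)]])
    have ra: "r a = w a mod int d" unfolding r_def u(2) by (simp add: minus_div_mult_eq_mod)
    have "\<not> r a > 0"
    proof
      assume pos: "r a > 0"
      then have "d \<le> nat (r a)" using least[of "nat (r a)"] r by auto
      moreover have "w a mod int d < int d" using d by simp
      ultimately show False using pos ra by linarith
    qed
    then have "w a mod int d = 0" using ra d by (metis pos_mod_sign of_nat_0_less_iff order_le_less)
    then show ?thesis using u(2) by (simp add: dvd_eq_mod_eq_0)
  qed
  then show ?thesis using that u d by simp
qed

lemma int_basis_extend:
  assumes K: "int_fun_subgroup K" and b: "int_basis {v \<in> K. v a = 0} b s"
    and u: "u \<in> K" "u a > 0" "\<And>w. w \<in> K \<Longrightarrow> u a dvd w a"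
  shows "int_basis K (b(s := u)) (Suc s)"
  unfolding int_basis_def
proof (intro conjI allI impI ballI)
  have sum_b': "(\<Sum>j<Suc s. c j * (b(s := u)) j i) = (\<Sum>j<s. c j * b j i) + c s * u i" for c i
    by (auto intro: sum.cong)
  {
    fix j assume "j < Suc s"
    then show "(b(s := u)) j \<in> K" using b u by (auto simp: int_basis_def less_Suc_eq)
  next
    fix v assume v: "v \<in> K"
    obtain q where q: "v a = u a * q" using u(3)[OF v] by blast
    have "(\<lambda>i. v i - q * u i) \<in> {v \<in> K. v a = 0}"
      using int_fun_subgroup_diff[OF K v int_fun_subgroup_mult[OF K u(1)]] q by simp
    then obtain c where c: "(\<lambda>i. v i - q * u i) = (\<lambda>i. \<Sum>j<s. c j * b j i)"
      using b by (auto simp: int_basis_def)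
    have cq: "(\<Sum>j<s. (c(s := q)) j * b j i) = (\<Sum>j<s. c j * b j i)" for i
      by (rule sum.cong) auto
    have "v = (\<lambda>i. \<Sum>j<Suc s. (c(s := q)) j * (b(s := u)) j i)"
      unfolding sum_b' cq using c by (simp add: fun_eq_iff algebra_simps)
    then show "\<exists>c. v = (\<lambda>i. \<Sum>j<Suc s. c j * (b(s := u)) j i)" by blast
  next
    fix c j assume c: "(\<lambda>i. \<Sum>j<Suc s. c j * (b(s := u)) j i) = (\<lambda>i. 0)" and j: "j < Suc s"
    have c_at: "(\<Sum>j<s. c j * b j i) + c s * u i = 0" for i
      using fun_cong[OF c, of i] by (simp only: sum_b')
    have "b j a = 0" if "j < s" for j using b that by (auto simp: int_basis_def)
    then have "c s * u a = 0" using c_at[of a] by simp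
    then have cs: "c s = 0" using u(2) by simp
    then have "(\<lambda>i. \<Sum>j<s. c j * b j i) = (\<lambda>i. 0)" using c_at by simp
    then show "c j = 0" using b cs j by (auto simp: int_basis_def less_Suc_eq)
  }
qed

theorem int_fun_subgroup_has_basis:
  assumes "finite I" "int_fun_subgroup K" "\<And>v i. v \<in> K \<Longrightarrow> i \<notin> I \<Longrightarrow> v i = 0"
  shows "\<exists>s b. int_basis K b s"
  using assms
proof (induction I arbitrary: K rule: finite_induct)
  case empty
  then have "K = {\<lambda>i. 0}" by (auto simp: int_fun_subgroup_def)
  then have "int_basis K (\<lambda>_ _. 0) 0" by (simp add: int_basis_def)
  then show ?case by blast
next
  case (insert a I)
  define K0 where "K0 = {v \<in> K. v a = 0}"
  have K0: "int_fun_subgroup K0" using insert.prems(1) by (auto simp: int_fun_subgroup_def K0_def)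
  have "v i = 0" if "v \<in> K0" "i \<notin> I" for v i
    using insert.prems(2) that by (cases "i = a") (auto simp: K0_def)
  then have "\<exists>s b. int_basis K0 b s" by (rule insert.IH[OF K0])
  then obtain s b where b: "int_basis K0 b s" by blast
  show ?case
  proof (cases "\<exists>v\<in>K. v a \<noteq> 0")
    case False
    then have "K0 = K" by (auto simp: K0_def)
    then show ?thesis using b by blast
  next
    case True
    then obtain u where "u \<in> K" "u a > 0" "\<And>w. w \<in> K \<Longrightarrow> u a dvd w a"
      using int_fun_subgroup_coordinate_generator[OF insert.prems(1)] by metis
    then show ?thesis using int_basis_extend[OF insert.prems(1) b[unfolded K0_def]] by blast
  qed
qed

section \<open>Integer power products in abelian groups\<close>

context group
begin

text \<open>Not simp rules: the simplifier turns \<open>x [^] nat n\<close> back into \<open>x [^] n\<close> and loops.\<close>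

lemma int_pow_nonneg: "0 \<le> n \<Longrightarrow> x [^] (n::int) = x [^] nat n"
  by (metis int_pow_int nat_0_le)

lemma int_pow_negative: "x \<in> carrier G \<Longrightarrow> n < 0 \<Longrightarrow> x [^] (n::int) = inv (x [^] nat (- n))"
  by (metis int_pow_neg_int nat_0_le neg_0_le_iff_le minus_minus order_less_imp_le)

lemma subgroup_nat_pow_closed: "subgroup H G \<Longrightarrow> h \<in> H \<Longrightarrow> h [^] (n::nat) \<in> H"
  by (metis subgroup_int_pow_closed int_pow_int)

end

context comm_group
begin

definition pow_prod :: "('i \<Rightarrow> 'a) \<Rightarrow> ('i \<Rightarrow> int) \<Rightarrow> 'i set \<Rightarrow> 'a" where
  "pow_prod e c J = finprod G (\<lambda>i. e i [^] c i) J"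

lemma pow_prod_closed [simp]: "e \<in> J \<rightarrow> carrier G \<Longrightarrow> pow_prod e c J \<in> carrier G"
  unfolding pow_prod_def by (auto intro!: finprod_closed)

lemma pow_prod_empty [simp]: "pow_prod e c {} = \<one>"
  unfolding pow_prod_def by simp

lemma pow_prod_zero [simp]: "pow_prod e (\<lambda>i. 0) J = \<one>"
  unfolding pow_prod_def by simp

lemma pow_prod_cong:
  "e \<in> J \<rightarrow> carrier G \<Longrightarrow> (\<And>i. i \<in> J \<Longrightarrow> c i = d i) \<Longrightarrow> pow_prod e c J = pow_prod e d J"
  unfolding pow_prod_def by (auto intro!: finprod_cong')

lemma pow_prod_insert:
  "finite J \<Longrightarrow> j \<notin> J \<Longrightarrow> e \<in> insert j J \<rightarrow> carrier G \<Longrightarrow>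
    pow_prod e c (insert j J) = e j [^] c j \<otimes> pow_prod e c J"
  unfolding pow_prod_def by (intro finprod_insert) auto

lemma pow_prod_add:
  assumes "e \<in> J \<rightarrow> carrier G"
  shows "pow_prod e (\<lambda>i. c i + d i) J = pow_prod e c J \<otimes> pow_prod e d J"
proof -
  have "pow_prod e (\<lambda>i. c i + d i) J = finprod G (\<lambda>i. e i [^] c i \<otimes> e i [^] d i) J"
    unfolding pow_prod_def using assms by (intro finprod_cong') (auto intro!: int_pow_mult)
  also have "\<dots> = pow_prod e c J \<otimes> pow_prod e d J"
    unfolding pow_prod_def using assms by (intro finprod_multf) auto
  finally show ?thesis .
qed

lemma pow_prod_uminus:
  assumes "e \<in> J \<rightarrow> carrier G"
  shows "pow_prod e (\<lambda>i. - c i) J = inv pow_prod e c J"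
proof -
  have "pow_prod e (\<lambda>i. - c i) J \<otimes> pow_prod e c J = \<one>"
    using pow_prod_add[OF assms, of "\<lambda>i. - c i" c] by simp
  then show ?thesis using assms by (intro inv_equality[symmetric]) simp_all
qed

lemma pow_prod_diff:
  "e \<in> J \<rightarrow> carrier G \<Longrightarrow> pow_prod e (\<lambda>i. c i - d i) J = pow_prod e c J \<otimes> inv pow_prod e d J"
  using pow_prod_add[of e J c "\<lambda>i. - d i"] pow_prod_uminus[of e J d] by simp

lemma additive_one:
  fixes h :: "'a \<Rightarrow> 'r::ab_group_add"
  assumes "\<And>x y. x \<in> carrier G \<Longrightarrow> y \<in> carrier G \<Longrightarrow> h (x \<otimes> y) = h x + h y"
  shows "h \<one> = 0"
  using assms[of \<one> \<one>] by simp

lemma additive_inv: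
  fixes h :: "'a \<Rightarrow> 'r::ab_group_add"
  assumes h: "\<And>x y. x \<in> carrier G \<Longrightarrow> y \<in> carrier G \<Longrightarrow> h (x \<otimes> y) = h x + h y"
    and x: "x \<in> carrier G"
  shows "h (inv x) = - h x"
  using h[of "inv x" x] x additive_one[OF h] by (simp add: eq_neg_iff_add_eq_0)

lemma additive_int_pow:
  fixes h :: "'a \<Rightarrow> 'r::comm_ring_1"
  assumes h: "\<And>x y. x \<in> carrier G \<Longrightarrow> y \<in> carrier G \<Longrightarrow> h (x \<otimes> y) = h x + h y"
    and x: "x \<in> carrier G"
  shows "h (x [^] (n::int)) = of_int n * h x"
proof -
  have nat_pow: "h (x [^] (m::nat)) = of_nat m * h x" for m
    by (induction m) (simp_all add: additive_one[OF h] h x algebra_simps)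
  show ?thesis
  proof (cases "n \<ge> 0")
    case True
    then show ?thesis unfolding int_pow_nonneg[OF True] nat_pow by simp
  next
    case False
    then have "h (x [^] n) = h (inv (x [^] nat (- n)))" using int_pow_negative[OF x] by simp
    also have "\<dots> = - (of_nat (nat (- n)) * h x)" by (simp only: additive_inv[OF h] nat_pow x nat_pow_closed)
    also have "\<dots> = of_int n * h x" using False by simp
    finally show ?thesis .
  qed
qed

lemma additive_pow_prod:
  fixes h :: "'a \<Rightarrow> 'r::comm_ring_1"
  assumes h: "\<And>x y. x \<in> carrier G \<Longrightarrow> y \<in> carrier G \<Longrightarrow> h (x \<otimes> y) = h x + h y"
    and "finite J" "e \<in> J \<rightarrow> carrier G"
  shows "h (pow_prod e c J) = (\<Sum>i\<in>J. of_int (c i) * h (e i))"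
  using assms(2,3)
  by (induction J rule: finite_induct)
    (simp_all add: pow_prod_insert h additive_one[OF h] additive_int_pow[OF h])

lemma subgroup_mult_inv_cancel:
  assumes R: "subgroup R G" and car: "a \<in> carrier G" "b \<in> carrier G" "y \<in> carrier G"
    and "y \<otimes> inv a \<in> R" "y \<otimes> inv b \<in> R"
  shows "a \<otimes> inv b \<in> R"
proof -
  have "inv (y \<otimes> inv a) \<otimes> (y \<otimes> inv b) = (a \<otimes> inv y) \<otimes> (y \<otimes> inv b)"
    using car by (simp add: inv_mult m_comm)
  also have "\<dots> = a \<otimes> inv b" using car by (simp add: m_assoc[symmetric]) (simp add: m_assoc)
  finally show ?thesis using assms by (metis subgroup.m_closed subgroup.m_inv_closed)
qed

lemma subgroup_nat_pow_preimage:
  assumes W: "subgroup W G"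
  shows "subgroup {x \<in> carrier G. x [^] (M::nat) \<in> W} G"
proof (rule subgroupI)
  show "{x \<in> carrier G. x [^] M \<in> W} \<noteq> {}"
    using subgroup.one_closed[OF W] by auto
next
  fix a assume "a \<in> {x \<in> carrier G. x [^] M \<in> W}"
  then show "inv a \<in> {x \<in> carrier G. x [^] M \<in> W}"
    using subgroup.m_inv_closed[OF W] by (simp add: nat_pow_inv)
next
  fix a b assume "a \<in> {x \<in> carrier G. x [^] M \<in> W}" "b \<in> {x \<in> carrier G. x [^] M \<in> W}"
  then show "a \<otimes> b \<in> {x \<in> carrier G. x [^] M \<in> W}"
    using subgroup.m_closed[OF W] by (simp add: nat_pow_distrib)
qed auto

lemma subgroup_radical:
  assumes H: "subgroup H G"
  shows "subgroup {x \<in> carrier G. \<exists>n::nat. n > 0 \<and> x [^] n \<in> H} G"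
proof (rule subgroupI)
  show "{x \<in> carrier G. \<exists>n::nat. n > 0 \<and> x [^] n \<in> H} \<noteq> {}"
    using subgroup.one_closed[OF H] by (auto intro!: exI[of _ "1::nat"])
next
  fix a assume "a \<in> {x \<in> carrier G. \<exists>n::nat. n > 0 \<and> x [^] n \<in> H}"
  then show "inv a \<in> {x \<in> carrier G. \<exists>n::nat. n > 0 \<and> x [^] n \<in> H}"
    using subgroup.m_inv_closed[OF H] by (auto simp: nat_pow_inv)
next
  fix a b assume "a \<in> {x \<in> carrier G. \<exists>n::nat. n > 0 \<and> x [^] n \<in> H}"
    "b \<in> {x \<in> carrier G. \<exists>n::nat. n > 0 \<and> x [^] n \<in> H}"
  then obtain n m :: nat where a: "a \<in> carrier G" "n > 0" "a [^] n \<in> H"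
    and b: "b \<in> carrier G" "m > 0" "b [^] m \<in> H" by blast
  have "(a \<otimes> b) [^] (n * m) = (a [^] n) [^] m \<otimes> (b [^] m) [^] n"
    using a b by (simp add: nat_pow_distrib nat_pow_pow mult.commute)
  also have "\<dots> \<in> H"
    using a b subgroup.m_closed[OF H] subgroup_nat_pow_closed[OF H] by blast
  finally show "a \<otimes> b \<in> {x \<in> carrier G. \<exists>n::nat. n > 0 \<and> x [^] n \<in> H}"
    using a b by (auto intro!: exI[of _ "n * m"])
qed auto

lemma nat_pow_in_subgroup_if_int_pow:
  assumes W: "subgroup W G" and x: "x \<in> carrier G" and xn: "x [^] (n::int) \<in> W" and "n \<noteq> 0"
  shows "\<exists>m::nat. m > 0 \<and> x [^] m \<in> W"
proof (cases "n > 0")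
  case True
  have "x [^] nat n \<in> W" using xn unfolding int_pow_nonneg[OF less_imp_le[OF True]] .
  then show ?thesis using True by (intro exI[of _ "nat n"]) simp
next
  case False
  then have "x [^] nat (- n) = inv (x [^] n)"
    using int_pow_negative[OF x, of n] x \<open>n \<noteq> 0\<close> by simp
  then show ?thesis using False \<open>n \<noteq> 0\<close> subgroup.m_inv_closed[OF W xn]
    by (intro exI[of _ "nat (- n)"]) simp
qed

lemma uniform_power_in_subgroup:
  assumes W: "subgroup W G" and F: "finite F" "F \<subseteq> carrier G" "generate G F = carrier G"
    and pow: "\<And>f. f \<in> F \<Longrightarrow> \<exists>m::nat. m > 0 \<and> f [^] m \<in> W"
  obtains M :: nat where "M > 0" "\<And>x. x \<in> carrier G \<Longrightarrow> x [^] M \<in> W"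
proof -
  obtain m where m: "\<forall>f\<in>F. m f > 0 \<and> f [^] (m f :: nat) \<in> W"
    using bchoice[of F "\<lambda>f m. m > 0 \<and> f [^] (m::nat) \<in> W"] pow by blast
  define M where "M = (\<Prod>f\<in>F. m f)"
  have F_sub: "F \<subseteq> {x \<in> carrier G. x [^] M \<in> W}"
  proof
    fix f assume f: "f \<in> F"
    then obtain q where "M = m f * q" unfolding M_def using F(1) by (metis dvd_prod_eqI dvdE)
    then have "f [^] M = (f [^] m f) [^] q" using f F(2) by (auto simp: nat_pow_pow)
    also have "\<dots> \<in> W" using m f subgroup_nat_pow_closed[OF W] by blast
    finally show "f \<in> {x \<in> carrier G. x [^] M \<in> W}" using f F(2) by blast
  qed
  have "carrier G \<subseteq> {x \<in> carrier G. x [^] M \<in> W}"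
    using generate_subgroup_incl[OF F_sub subgroup_nat_pow_preimage[OF W]] F(3) by simp
  moreover have "M > 0" unfolding M_def using m by (simp add: prod_pos)
  ultimately show ?thesis using that by blast
qed

section \<open>Torsion-free quotients of finitely generated abelian groups are free\<close>

definition indep_mod :: "'a set \<Rightarrow> ('i \<Rightarrow> 'a) \<Rightarrow> 'i set \<Rightarrow> bool" where
  "indep_mod R e J \<longleftrightarrow> (\<forall>c. pow_prod e c J \<in> R \<longrightarrow> (\<forall>i\<in>J. c i = 0))"

definition basis_mod :: "'a set \<Rightarrow> (nat \<Rightarrow> 'a) \<Rightarrow> nat \<Rightarrow> bool" where
  "basis_mod R e s \<longleftrightarrow> e \<in> {..<s} \<rightarrow> carrier G \<and> indep_mod R e {..<s} \<and>
     (\<forall>x\<in>carrier G. \<exists>c. x \<otimes> inv pow_prod e c {..<s} \<in> R)"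

lemma subgroup_span_mod:
  assumes R: "subgroup R G" and e: "e \<in> J \<rightarrow> carrier G"
  shows "subgroup {x \<in> carrier G. \<exists>c. x \<otimes> inv pow_prod e c J \<in> R} G"
proof (rule subgroupI)
  show "{x \<in> carrier G. \<exists>c. x \<otimes> inv pow_prod e c J \<in> R} \<noteq> {}"
    using subgroup.one_closed[OF R] by (auto intro!: exI[of _ "\<lambda>i. 0"])
next
  fix a assume "a \<in> {x \<in> carrier G. \<exists>c. x \<otimes> inv pow_prod e c J \<in> R}"
  then obtain c where a: "a \<in> carrier G" "a \<otimes> inv pow_prod e c J \<in> R" by blast
  have "inv a \<otimes> inv pow_prod e (\<lambda>i. - c i) J = inv (a \<otimes> inv pow_prod e c J)"
    using a e by (simp add: pow_prod_uminus inv_mult)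
  then show "inv a \<in> {x \<in> carrier G. \<exists>c. x \<otimes> inv pow_prod e c J \<in> R}"
    using a subgroup.m_inv_closed[OF R] by (metis (no_types, lifting) inv_closed mem_Collect_eq)
next
  fix a b assume "a \<in> {x \<in> carrier G. \<exists>c. x \<otimes> inv pow_prod e c J \<in> R}"
    "b \<in> {x \<in> carrier G. \<exists>c. x \<otimes> inv pow_prod e c J \<in> R}"
  then obtain c d where a: "a \<in> carrier G" "a \<otimes> inv pow_prod e c J \<in> R"
    and b: "b \<in> carrier G" "b \<otimes> inv pow_prod e d J \<in> R" by blast
  have "a \<otimes> b \<otimes> inv pow_prod e (\<lambda>i. c i + d i) J
      = (a \<otimes> inv pow_prod e c J) \<otimes> (b \<otimes> inv pow_prod e d J)"
    using a b e by (simp add: pow_prod_add inv_mult m_ac)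
  then show "a \<otimes> b \<in> {x \<in> carrier G. \<exists>c. x \<otimes> inv pow_prod e c J \<in> R}"
    using a b subgroup.m_closed[OF R] by (metis (no_types, lifting) m_closed mem_Collect_eq)
qed auto

lemma indep_mod_unique:
  assumes R: "subgroup R G" and indep: "indep_mod R e J" and e: "e \<in> J \<rightarrow> carrier G"
    and y: "y \<in> carrier G" and c: "y \<otimes> inv pow_prod e c J \<in> R" and d: "y \<otimes> inv pow_prod e d J \<in> R"
    and i: "i \<in> J"
  shows "c i = d i"
proof -
  have "pow_prod e c J \<otimes> inv pow_prod e d J \<in> R"
    using subgroup_mult_inv_cancel[OF R _ _ y c d] e by simp
  then have "pow_prod e (\<lambda>i. c i - d i) J \<in> R" using e by (simp only: pow_prod_diff)
  then have "c i - d i = 0" using indep i unfolding indep_mod_def by blast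
  then show ?thesis by simp
qed

lemma exists_maximal_indep_mod:
  assumes "finite F"
  obtains I where "I \<subseteq> F" "indep_mod R id I"
    "\<And>f. f \<in> F \<Longrightarrow> f \<notin> I \<Longrightarrow> \<not> indep_mod R id (insert f I)"
proof -
  let ?P = "\<lambda>I. I \<subseteq> F \<and> indep_mod R id I"
  have "?P {}" by (simp add: indep_mod_def)
  moreover have "\<forall>I. ?P I \<longrightarrow> card I < Suc (card F)"
    using assms by (auto intro: le_imp_less_Suc card_mono)
  ultimately obtain I where I: "?P I" and max: "\<And>J. ?P J \<Longrightarrow> card J \<le> card I"
    using ex_has_greatest_nat[of ?P "{}" card "Suc (card F)"] by blast
  have "\<not> indep_mod R id (insert f I)" if "f \<in> F" "f \<notin> I" for f
  proof
    assume "indep_mod R id (insert f I)"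
    then have "card (insert f I) \<le> card I" using max I that by blast
    moreover have "finite I" using I assms finite_subset by blast
    ultimately show False using that(2) by simp
  qed
  then show ?thesis using that I by blast
qed

lemma power_in_span_of_maximal_indep_mod:
  assumes R: "subgroup R G" and F: "finite F" "F \<subseteq> carrier G"
    and I: "I \<subseteq> F" "indep_mod R id I" "\<And>f. f \<in> F \<Longrightarrow> f \<notin> I \<Longrightarrow> \<not> indep_mod R id (insert f I)"
    and f: "f \<in> F"
  shows "\<exists>m::nat. m > 0 \<and> f [^] m \<in> {x \<in> carrier G. \<exists>c. x \<otimes> inv pow_prod id c I \<in> R}"
    (is "\<exists>m. _ \<and> _ \<in> ?W")
proof -
  have fin: "finite I" using I(1) F(1) finite_subset by blast
  have id: "id \<in> insert f I \<rightarrow> carrier G" using I(1) F(2) f by auto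
  have W: "subgroup ?W G" using subgroup_span_mod[OF R] id by auto
  have fc: "f \<in> carrier G" using f F(2) by blast
  show ?thesis
  proof (cases "f \<in> I")
    case True
    have "pow_prod id (\<lambda>i. if i = f then 1 else 0) I = finprod G (\<lambda>i. if f = i then i else \<one>) I"
      unfolding pow_prod_def using id by (intro finprod_cong') auto
    also have "\<dots> = f" using True fin id by (intro finprod_singleton) auto
    finally have "f \<otimes> inv pow_prod id (\<lambda>i. if i = f then 1 else 0) I \<in> R"
      using fc subgroup.one_closed[OF R] by simp
    then have "f \<in> ?W" using fc by blast
    then show ?thesis using fc by (intro exI[of _ "1::nat"]) simp
  next
    case False
    have "\<not> indep_mod R id (insert f I)" using I(3)[OF f False] .
    then obtain c where c: "pow_prod id c (insert f I) \<in> R" and nz: "\<exists>i\<in>insert f I. c i \<noteq> 0"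
      unfolding indep_mod_def by blast
    have split: "pow_prod id c (insert f I) = f [^] c f \<otimes> pow_prod id c I"
      using pow_prod_insert[OF fin False id] by simp
    have "c f \<noteq> 0"
    proof
      assume "c f = 0"
      then have "pow_prod id c I \<in> R" using c split id by simp
      then have "\<forall>i\<in>I. c i = 0" using I(2) unfolding indep_mod_def by blast
      then show False using nz \<open>c f = 0\<close> by blast
    qed
    moreover have "f [^] c f \<otimes> inv pow_prod id (\<lambda>i. - c i) I \<in> R"
      using c split id by (simp add: pow_prod_uminus)
    then have "f [^] c f \<in> ?W" using fc by blast
    ultimately show ?thesis using nat_pow_in_subgroup_if_int_pow[OF W fc] by blast
  qed
qed

lemma uniform_power_span_mod:
  assumes F: "finite F" "F \<subseteq> carrier G" "generate G F = carrier G" and R: "subgroup R G"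
  obtains I and M :: nat where "finite I" "id \<in> I \<rightarrow> carrier G" "indep_mod R id I" "M > 0"
    "\<And>x. x \<in> carrier G \<Longrightarrow> \<exists>c. x [^] M \<otimes> inv pow_prod id c I \<in> R"
proof -
  obtain I where I: "I \<subseteq> F" "indep_mod R id I"
    "\<And>f. f \<in> F \<Longrightarrow> f \<notin> I \<Longrightarrow> \<not> indep_mod R id (insert f I)"
    using exists_maximal_indep_mod[OF F(1)] by blast
  have "finite I" using I(1) F(1) finite_subset by blast
  moreover have id: "id \<in> I \<rightarrow> carrier G" using I(1) F(2) by auto
  moreover obtain M :: nat where "M > 0"
    "\<And>x. x \<in> carrier G \<Longrightarrow> x [^] M \<in> {x \<in> carrier G. \<exists>c. x \<otimes> inv pow_prod id c I \<in> R}"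
    using uniform_power_in_subgroup[OF subgroup_span_mod[OF R id] F]
      power_in_span_of_maximal_indep_mod[OF R F(1,2) I] by blast
  ultimately show ?thesis using that I(2) by blast
qed

text \<open>\<open>\<theta> x\<close> is the coefficient vector of \<open>x\<^sup>M\<close> modulo \<open>R\<close>; it is additive with kernel \<open>R\<close>
  because \<open>G/R\<close> is torsion-free.\<close>
lemma torsion_free_quotient_embeds:
  assumes F: "finite F" "F \<subseteq> carrier G" "generate G F = carrier G" and R: "subgroup R G"
    and rad: "\<And>x m. x \<in> carrier G \<Longrightarrow> m > 0 \<Longrightarrow> x [^] (m::nat) \<in> R \<Longrightarrow> x \<in> R"
  obtains I and \<theta> :: "'a \<Rightarrow> 'a \<Rightarrow> int"
  where "finite I" "\<And>x i. x \<in> carrier G \<Longrightarrow> i \<notin> I \<Longrightarrow> \<theta> x i = 0"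
    "\<And>x y. x \<in> carrier G \<Longrightarrow> y \<in> carrier G \<Longrightarrow> \<theta> (x \<otimes> y) = (\<lambda>i. \<theta> x i + \<theta> y i)"
    "\<And>x. x \<in> carrier G \<Longrightarrow> \<theta> x = (\<lambda>i. 0) \<longleftrightarrow> x \<in> R"
proof -
  obtain I and M :: nat where fin: "finite I" and id: "id \<in> I \<rightarrow> carrier G"
    and indep: "indep_mod R id I" and "M > 0"
    and M: "\<And>x. x \<in> carrier G \<Longrightarrow> \<exists>c. x [^] M \<otimes> inv pow_prod id c I \<in> R"
    using uniform_power_span_mod[OF F R] by blast
  define coeff where "coeff x c \<longleftrightarrow> (\<forall>i. i \<notin> I \<longrightarrow> c i = 0) \<and> x [^] M \<otimes> inv pow_prod id c I \<in> R"
    for x c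
  define \<theta> where "\<theta> x = (SOME c. coeff x c)" for x
  have \<theta>: "coeff x (\<theta> x)" if x: "x \<in> carrier G" for x
  proof -
    obtain c where c: "x [^] M \<otimes> inv pow_prod id c I \<in> R" using M[OF x] by blast
    have "pow_prod id (\<lambda>i. if i \<in> I then c i else 0) I = pow_prod id c I"
      using id by (intro pow_prod_cong) auto
    then have "coeff x (\<lambda>i. if i \<in> I then c i else 0)" using c by (simp add: coeff_def)
    then show ?thesis unfolding \<theta>_def by (rule someI[where P = "coeff x"])
  qed
  have unique: "c = d" if "coeff x c" "coeff x d" "x \<in> carrier G" for x c d
  proof
    fix i show "c i = d i"
      using indep_mod_unique[OF R indep id _ _ _ , of "x [^] M" c d i] that by (cases "i \<in> I") (auto simp: coeff_def)
  qed
  have "\<theta> (x \<otimes> y) = (\<lambda>i. \<theta> x i + \<theta> y i)" if x: "x \<in> carrier G" and y: "y \<in> carrier G" for x y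
  proof (rule unique[OF \<theta>])
    have "(x \<otimes> y) [^] M \<otimes> inv pow_prod id (\<lambda>i. \<theta> x i + \<theta> y i) I
        = (x [^] M \<otimes> inv pow_prod id (\<theta> x) I) \<otimes> (y [^] M \<otimes> inv pow_prod id (\<theta> y) I)"
      using x y id by (simp add: pow_prod_add inv_mult nat_pow_distrib m_ac)
    then show "coeff (x \<otimes> y) (\<lambda>i. \<theta> x i + \<theta> y i)"
      using \<theta>[OF x] \<theta>[OF y] subgroup.m_closed[OF R] by (simp add: coeff_def)
  qed (use x y in auto)
  moreover have "\<theta> x = (\<lambda>i. 0) \<longleftrightarrow> x \<in> R" if x: "x \<in> carrier G" for x
  proof
    assume "\<theta> x = (\<lambda>i. 0)"
    then have "x [^] M \<in> R" using \<theta>[OF x] x by (simp add: coeff_def)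
    then show "x \<in> R" using rad x \<open>M > 0\<close> by blast
  next
    assume "x \<in> R"
    then have "coeff x (\<lambda>i. 0)" using subgroup_nat_pow_closed[OF R] x by (simp add: coeff_def)
    then show "\<theta> x = (\<lambda>i. 0)" using unique \<theta> x by blast
  qed
  moreover have "\<theta> x i = 0" if "x \<in> carrier G" "i \<notin> I" for x i
    using \<theta> that by (simp add: coeff_def)
  ultimately show ?thesis using that fin by blast
qed

lemma int_fun_subgroup_additive_image:
  fixes \<theta> :: "'a \<Rightarrow> 'i \<Rightarrow> int"
  assumes hom: "\<And>x y. x \<in> carrier G \<Longrightarrow> y \<in> carrier G \<Longrightarrow> \<theta> (x \<otimes> y) = (\<lambda>i. \<theta> x i + \<theta> y i)"
  shows "int_fun_subgroup (\<theta> ` carrier G)"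
  unfolding int_fun_subgroup_def
proof (intro conjI ballI)
  have "\<theta> \<one> = (\<lambda>i. 0)" using additive_one[of "\<lambda>x. \<theta> x i" for i] hom by (simp add: fun_eq_iff)
  then show "(\<lambda>i. 0) \<in> \<theta> ` carrier G" by (metis image_eqI one_closed)
next
  fix v w assume "v \<in> \<theta> ` carrier G" "w \<in> \<theta> ` carrier G"
  then obtain x y where "x \<in> carrier G" "y \<in> carrier G" "v = \<theta> x" "w = \<theta> y" by blast
  then show "(\<lambda>i. v i + w i) \<in> \<theta> ` carrier G"
    using hom[of x y] by (auto intro!: image_eqI[where x = "x \<otimes> y"])
next
  fix v assume "v \<in> \<theta> ` carrier G"
  then obtain x where x: "x \<in> carrier G" "v = \<theta> x" by blast
  have "\<theta> (inv x) = (\<lambda>i. - \<theta> x i)"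
    using additive_inv[of "\<lambda>x. \<theta> x i" x for i] hom x by (simp add: fun_eq_iff)
  then show "(\<lambda>i. - v i) \<in> \<theta> ` carrier G" using x by (auto intro!: image_eqI[where x = "inv x"])
qed

lemma basis_mod_if_embeds:
  fixes \<theta> :: "'a \<Rightarrow> 'i \<Rightarrow> int"
  assumes R: "subgroup R G" and "finite I"
    and supp: "\<And>x i. x \<in> carrier G \<Longrightarrow> i \<notin> I \<Longrightarrow> \<theta> x i = 0"
    and hom: "\<And>x y. x \<in> carrier G \<Longrightarrow> y \<in> carrier G \<Longrightarrow> \<theta> (x \<otimes> y) = (\<lambda>i. \<theta> x i + \<theta> y i)"
    and ker: "\<And>x. x \<in> carrier G \<Longrightarrow> \<theta> x = (\<lambda>i. 0) \<longleftrightarrow> x \<in> R"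
  shows "\<exists>s e. basis_mod R e s"
proof -
  have \<theta>_div: "\<theta> (x \<otimes> inv y) = (\<lambda>i. \<theta> x i - \<theta> y i)" if "x \<in> carrier G" "y \<in> carrier G" for x y
    using hom[of x "inv y"] additive_inv[of "\<lambda>x. \<theta> x i" y for i] hom that by (simp add: fun_eq_iff)
  define K where "K = \<theta> ` carrier G"
  have K: "int_fun_subgroup K" unfolding K_def by (rule int_fun_subgroup_additive_image[OF hom])
  have "\<exists>s b. int_basis K b s"
    by (rule int_fun_subgroup_has_basis[OF \<open>finite I\<close> K]) (auto simp: K_def supp)
  then obtain s b where b: "int_basis K b s" by blast
  define e where "e j = inv_into (carrier G) \<theta> (b j)" for j
  have e: "e j \<in> carrier G" "\<theta> (e j) = b j" if "j < s" for j
    using b that unfolding e_def int_basis_def K_def by (auto intro: inv_into_into f_inv_into_f)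
  have e_car: "e \<in> {..<s} \<rightarrow> carrier G" using e by auto
  have \<theta>_pow_prod: "\<theta> (pow_prod e c {..<s}) = (\<lambda>i. \<Sum>j<s. c j * b j i)" for c
  proof
    fix i
    have "\<theta> (pow_prod e c {..<s}) i = (\<Sum>j<s. of_int (c j) * \<theta> (e j) i)"
      using additive_pow_prod[of "\<lambda>x. \<theta> x i", OF _ _ e_car] hom by simp
    then show "\<theta> (pow_prod e c {..<s}) i = (\<Sum>j<s. c j * b j i)" using e by simp
  qed
  have "basis_mod R e s"
    unfolding basis_mod_def indep_mod_def
  proof (intro conjI allI impI ballI e_car)
    fix x assume x: "x \<in> carrier G"
    then obtain c where "\<theta> x = (\<lambda>i. \<Sum>j<s. c j * b j i)" using b by (auto simp: int_basis_def K_def)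
    then have "\<theta> (x \<otimes> inv pow_prod e c {..<s}) = (\<lambda>i. 0)" using x e_car by (simp add: \<theta>_div \<theta>_pow_prod)
    then show "\<exists>c. x \<otimes> inv pow_prod e c {..<s} \<in> R" using x e_car ker by auto
  next
    fix c j assume "pow_prod e c {..<s} \<in> R" "j \<in> {..<s}"
    then show "c j = 0" using ker[of "pow_prod e c {..<s}"] e_car b
      by (auto simp: \<theta>_pow_prod int_basis_def)
  qed
  then show ?thesis by blast
qed

theorem torsion_free_quotient_has_basis:
  assumes "finite F" "F \<subseteq> carrier G" "generate G F = carrier G" and "subgroup R G"
    and "\<And>x m. x \<in> carrier G \<Longrightarrow> m > 0 \<Longrightarrow> x [^] (m::nat) \<in> R \<Longrightarrow> x \<in> R"
  shows "\<exists>s e. basis_mod R e s"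
proof (rule torsion_free_quotient_embeds[OF assms])
  fix I and \<theta> :: "'a \<Rightarrow> 'a \<Rightarrow> int"
  assume "finite I" "\<And>x i. x \<in> carrier G \<Longrightarrow> i \<notin> I \<Longrightarrow> \<theta> x i = 0"
    "\<And>x y. x \<in> carrier G \<Longrightarrow> y \<in> carrier G \<Longrightarrow> \<theta> (x \<otimes> y) = (\<lambda>i. \<theta> x i + \<theta> y i)"
    "\<And>x. x \<in> carrier G \<Longrightarrow> \<theta> x = (\<lambda>i. 0) \<longleftrightarrow> x \<in> R"
  then show ?thesis by (rule basis_mod_if_embeds[OF \<open>subgroup R G\<close>])
qed

end

section \<open>Roots of unity and complex characters\<close>

definition unity_root :: "nat \<Rightarrow> int \<Rightarrow> complex" where
  "unity_root k a = cis (2 * pi * of_int a / of_nat k)"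

lemma unity_root_add: "unity_root k (a + b) = unity_root k a * unity_root k b"
  unfolding unity_root_def by (simp add: cis_mult add_divide_distrib distrib_left)

lemma norm_unity_root [simp]: "norm (unity_root k a) = 1"
  by (simp add: unity_root_def)

lemma unity_root_mod:
  assumes "k > 0"
  shows "unity_root k (a mod int k) = unity_root k a"
proof -
  have "2 * pi * of_int (a div int k * int k) / of_nat k = 2 * pi * of_int (a div int k)"
    using assms by simp
  then have "unity_root k (a div int k * int k) = 1"
    unfolding unity_root_def by (simp add: cis_multiple_2pi)
  then show ?thesis using unity_root_add[of k "a div int k * int k" "a mod int k"] by simp
qed

lemma bij_betw_unity_root:
  assumes "k > 0"
  shows "bij_betw (unity_root k) {0..<int k} {z. z ^ k = 1}"
proof -
  have "bij_betw nat {0..<int k} {..<k}" by (rule bij_betwI[where g = int]) auto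
  then have "bij_betw ((\<lambda>j. cis (2 * pi * real j / real k)) \<circ> nat) {0..<int k} {z. z ^ k = 1}"
    using Complex.bij_betw_roots_unity[OF assms] by (rule bij_betw_trans)
  then show ?thesis by (rule bij_betw_cong[THEN iffD1, rotated]) (auto simp: unity_root_def)
qed

lemma unity_root_pow_eq_1: "k > 0 \<Longrightarrow> unity_root k a ^ k = 1"
  using bij_betw_apply[OF bij_betw_unity_root, of k "a mod int k"] unity_root_mod[of k a] by simp

locale complex_character = comm_group G for G (structure) +
  fixes \<phi> :: "'a \<Rightarrow> complex"
  assumes char_nonzero: "x \<in> carrier G \<Longrightarrow> \<phi> x \<noteq> 0"
    and char_mult: "x \<in> carrier G \<Longrightarrow> y \<in> carrier G \<Longrightarrow> \<phi> (x \<otimes> y) = \<phi> x * \<phi> y"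
begin

lemma char_one [simp]: "\<phi> \<one> = 1"
  using char_mult[of \<one> \<one>] char_nonzero[of \<one>] by simp

lemma char_inv: "x \<in> carrier G \<Longrightarrow> \<phi> (inv x) = inverse (\<phi> x)"
  using char_mult[of "inv x" x] char_nonzero[of x] by (simp add: field_simps)

lemma char_nat_pow: "x \<in> carrier G \<Longrightarrow> \<phi> (x [^] (n::nat)) = \<phi> x ^ n"
  by (induction n) (simp_all add: char_mult)

lemma char_int_pow:
  assumes x: "x \<in> carrier G"
  shows "\<phi> (x [^] (n::int)) = \<phi> x powi n"
proof (cases "n \<ge> 0")
  case True
  have "\<phi> (x [^] n) = \<phi> x ^ nat n" by (simp only: int_pow_nonneg[OF True] char_nat_pow x)
  then show ?thesis using True by (simp add: power_int_def)
next
  case False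
  then have "\<phi> (x [^] n) = inverse (\<phi> x ^ nat (- n))"
    by (simp only: int_pow_negative[OF x] not_le char_inv char_nat_pow x nat_pow_closed)
  then show ?thesis using False by (simp add: power_int_def power_inverse)
qed

lemma char_pow_prod:
  "finite J \<Longrightarrow> e \<in> J \<rightarrow> carrier G \<Longrightarrow> \<phi> (pow_prod e c J) = (\<Prod>i\<in>J. \<phi> (e i) powi c i)"
  by (induction J rule: finite_induct) (simp_all add: pow_prod_insert char_mult char_int_pow)

lemma exp_sum_Ln_char:
  "finite J \<Longrightarrow> e \<in> J \<rightarrow> carrier G \<Longrightarrow> exp (\<Sum>i\<in>J. of_int (c i) * Ln (\<phi> (e i))) = \<phi> (pow_prod e c J)"
  using char_nonzero by (simp add: exp_sum char_pow_prod exp_power_int[symmetric] Pi_iff)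

lemma char_generate:
  assumes "S \<subseteq> carrier G" "\<And>s. s \<in> S \<Longrightarrow> \<phi> s = 1" and "x \<in> generate G S"
  shows "\<phi> x = 1"
  using assms(3)
proof (induction x rule: generate.induct)
  case (inv h)
  then show ?case using assms(1,2) char_inv[of h] by auto
next
  case (eng h1 h2)
  then show ?case using generate_in_carrier[OF assms(1)] by (simp add: char_mult)
qed (use assms in auto)

end

lemma homT_complex_character:
  "comm_group G \<Longrightarrow> 0 \<notin> Gs \<Longrightarrow> \<phi> \<in> homT G Gs \<Longrightarrow> complex_character G \<phi>"
  unfolding homT_def complex_character_def complex_character_axioms_def by auto

section \<open>Components of the annihilator of \<open>S\<close>\<close>

locale annihilator = comm_group G for G (structure) +
  fixes S :: "'a set" and Gs :: "complex set"
  assumes S_carrier: "S \<subseteq> carrier G" and Gs: "Gs = sphere 0 1 \<or> Gs = - {0}"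
begin

abbreviation HS :: "('a \<Rightarrow> complex) set" where "HS \<equiv> Hset G Gs S"

definition N :: "'a set" where "N = generate G S"

definition sat :: "'a set" where "sat = {x \<in> carrier G. \<exists>n::nat. n > 0 \<and> x [^] n \<in> N}"

lemma N_subgroup: "subgroup N G"
  unfolding N_def by (rule generate_is_subgroup[OF S_carrier])

lemma S_subset_N: "S \<subseteq> N"
  unfolding N_def by (auto intro: generate.incl)

lemma sat_subgroup: "subgroup sat G"
  unfolding sat_def by (rule subgroup_radical[OF N_subgroup])

lemma sat_carrier: "sat \<subseteq> carrier G"
  by (auto simp: sat_def)

lemma N_subset_sat: "N \<subseteq> sat"
  using subgroup.subset[OF N_subgroup] by (auto simp: sat_def intro!: exI[of _ "1::nat"])

lemma sat_radical:
  assumes "x \<in> carrier G" "m > 0" "x [^] (m::nat) \<in> sat"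
  shows "x \<in> sat"
proof -
  obtain n :: nat where "n > 0" "x [^] (m * n) \<in> N" using assms by (auto simp: sat_def nat_pow_pow)
  then show ?thesis using assms(1,2) by (auto simp: sat_def intro!: exI[of _ "m * n"])
qed

lemma rcos_N_eq_N_iff: "x \<in> carrier G \<Longrightarrow> N #> x = N \<longleftrightarrow> x \<in> N"
  using coset_join1[of N x] coset_join2[of x N] N_subgroup by blast

lemma tor_quotient_carrier: "carrier (tor_group (G Mod N)) = (\<lambda>x. N #> x) ` sat"
proof -
  interpret Q: comm_group "G Mod N" by (rule abelian_FactGroup[OF N_subgroup])
  let ?T = "{C \<in> carrier (G Mod N). \<exists>n::nat. n > 0 \<and> C [^]\<^bsub>(G Mod N)\<^esub> n = \<one>\<^bsub>(G Mod N)\<^esub>}"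
  have "subgroup ?T (G Mod N)"
    using Q.subgroup_radical[OF Q.triv_subgroup] by simp
  then have "carrier (tor_group (G Mod N)) = ?T"
    unfolding tor_group_def by (rule subgroup.carrier_subgroup_generated_subgroup)
  also have "?T = (\<lambda>x. N #> x) ` sat"
  proof -
    have "(N #> x) [^]\<^bsub>(G Mod N)\<^esub> n = \<one>\<^bsub>(G Mod N)\<^esub> \<longleftrightarrow> x [^] n \<in> N"
      if "x \<in> carrier G" for x and n :: nat
      using that normal.FactGroup_pow[OF subgroup_imp_normal[OF N_subgroup]] rcos_N_eq_N_iff by simp
    then show ?thesis by (auto simp: carrier_FactGroup sat_def)
  qed
  finally show ?thesis .
qed

lemma tor_quotient_mult: "U \<otimes>\<^bsub>(tor_group (G Mod N))\<^esub> V = U <#> V"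
  and tor_quotient_one: "\<one>\<^bsub>(tor_group (G Mod N))\<^esub> = N"
  by (simp_all add: tor_group_def)

lemma rcos_N_mult: "x \<in> carrier G \<Longrightarrow> y \<in> carrier G \<Longrightarrow> (N #> x) <#> (N #> y) = N #> (x \<otimes> y)"
  using normal.rcos_sum[OF subgroup_imp_normal[OF N_subgroup]] by blast

lemma zero_notin_Gs: "0 \<notin> Gs"
  using Gs by auto

lemma HS_character: "\<phi> \<in> HS \<Longrightarrow> complex_character G \<phi>"
  using homT_complex_character[OF comm_group_axioms zero_notin_Gs] unfolding Hset_def by auto

lemma HS_extensional: "\<phi> \<in> HS \<Longrightarrow> \<phi> \<in> extensional (carrier G)"
  and HS_values: "\<phi> \<in> HS \<Longrightarrow> x \<in> carrier G \<Longrightarrow> \<phi> x \<in> Gs"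
  unfolding Hset_def homT_def by auto

lemma HS_memI:
  assumes "\<And>x. x \<in> carrier G \<Longrightarrow> \<phi> x \<in> Gs"
    and "\<And>x y. x \<in> carrier G \<Longrightarrow> y \<in> carrier G \<Longrightarrow> \<phi> (x \<otimes> y) = \<phi> x * \<phi> y"
    and "\<And>s. s \<in> S \<Longrightarrow> \<phi> s = 1"
  shows "(\<lambda>x\<in>carrier G. \<phi> x) \<in> HS"
  using assms S_carrier unfolding Hset_def homT_def by auto

lemma HS_trivial_on_N: "\<phi> \<in> HS \<Longrightarrow> x \<in> N \<Longrightarrow> \<phi> x = 1"
  using complex_character.char_generate[OF HS_character S_carrier] unfolding Hset_def N_def by blast

lemma HS_rcos_const:
  assumes \<phi>: "\<phi> \<in> HS" and x: "x \<in> carrier G" and y: "y \<in> N #> x"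
  shows "\<phi> y = \<phi> x"
proof -
  obtain h where "h \<in> N" "y = h \<otimes> x" using y unfolding r_coset_def by blast
  then show ?thesis
    using x subgroup.mem_carrier[OF N_subgroup] HS_trivial_on_N[OF \<phi>]
      complex_character.char_mult[OF HS_character[OF \<phi>]] by simp
qed

lemma finite_values_on_sat:
  assumes t: "t \<in> sat"
  shows "finite ((\<lambda>\<phi>. \<phi> t) ` HS)"
proof -
  obtain n :: nat where n: "t \<in> carrier G" "n > 0" "t [^] n \<in> N" using t by (auto simp: sat_def)
  have "(\<lambda>\<phi>. \<phi> t) ` HS \<subseteq> {z. z ^ n = 1}"
  proof
    fix z assume "z \<in> (\<lambda>\<phi>. \<phi> t) ` HS"
    then obtain \<phi> where \<phi>: "\<phi> \<in> HS" "z = \<phi> t" by blast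
    have "\<phi> t ^ n = \<phi> (t [^] n)"
      using complex_character.char_nat_pow[OF HS_character[OF \<phi>(1)] n(1)] by simp
    then show "z \<in> {z. z ^ n = 1}" using HS_trivial_on_N[OF \<phi>(1) n(3)] \<phi>(2) by simp
  qed
  moreover have "finite {z::complex. z ^ n = 1}" using n(2) by (intro finite_roots_unity) simp
  ultimately show ?thesis by (rule finite_subset)
qed

lemma component_eval_sat:
  assumes \<psi>: "\<psi> \<in> connected_component_set HS \<phi>" and t: "t \<in> sat"
  shows "\<psi> t = \<phi> t"
proof -
  let ?C = "connected_component_set HS \<phi>"
  have "\<phi> \<in> ?C" using \<psi> connected_component_in by fastforce
  have "continuous_on ?C (\<lambda>\<phi>::'a \<Rightarrow> complex. \<phi> t)"
    by (rule continuous_on_subset[OF continuous_on_product_coordinates]) simp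
  moreover have "finite ((\<lambda>\<phi>. \<phi> t) ` ?C)"
    by (rule finite_subset[OF image_mono[OF connected_component_subset] finite_values_on_sat[OF t]])
  ultimately have "(\<lambda>\<phi>. \<phi> t) constant_on ?C"
    by (rule continuous_finite_range_constant[OF connected_connected_component])
  then show ?thesis using \<psi> \<open>\<phi> \<in> ?C\<close> unfolding constant_on_def by metis
qed

lemma HS_exp_twist_connected:
  assumes \<psi>: "\<psi> \<in> HS"
    and z_mult: "\<And>x y. x \<in> carrier G \<Longrightarrow> y \<in> carrier G \<Longrightarrow> z (x \<otimes> y) = z x + z y"
    and z_S: "\<And>x. x \<in> S \<Longrightarrow> z x = 0"
    and z_Re: "\<And>x. Gs = sphere 0 1 \<Longrightarrow> x \<in> carrier G \<Longrightarrow> Re (z x) = 0"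
  shows "(\<lambda>x\<in>carrier G. \<psi> x * exp (z x)) \<in> connected_component_set HS \<psi>"
proof -
  interpret \<psi>: complex_character G \<psi> by (rule HS_character[OF \<psi>])
  define \<gamma> where "\<gamma> u = (\<lambda>x\<in>carrier G. \<psi> x * exp (of_real u * z x))" for u :: real
  have "\<gamma> u \<in> HS" for u
    unfolding \<gamma>_def
  proof (rule HS_memI)
    fix x assume x: "x \<in> carrier G"
    show "\<psi> x * exp (of_real u * z x) \<in> Gs"
    proof (cases "Gs = sphere 0 1")
      case True
      then show ?thesis using HS_values[OF \<psi> x] z_Re[OF True x] by (simp add: norm_mult)
    next
      case False
      then show ?thesis using Gs \<psi>.char_nonzero[OF x] by simp
    qed
  next
    fix x y assume "x \<in> carrier G" "y \<in> carrier G"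
    then show "\<psi> (x \<otimes> y) * exp (of_real u * z (x \<otimes> y)) =
        \<psi> x * exp (of_real u * z x) * (\<psi> y * exp (of_real u * z y))"
      by (simp add: \<psi>.char_mult z_mult distrib_left exp_add)
  next
    fix s assume "s \<in> S"
    then show "\<psi> s * exp (of_real u * z s) = 1"
      using z_S HS_trivial_on_N[OF \<psi>] S_subset_N by auto
  qed
  moreover have "continuous_on {0..1} \<gamma>"
  proof (rule continuous_on_coordinatewise_then_product)
    fix x
    show "continuous_on {0..1} (\<lambda>u. \<gamma> u x)"
      unfolding \<gamma>_def by (cases "x \<in> carrier G") (simp_all add: continuous_intros)
  qed
  moreover have "\<gamma> 0 = \<psi>" using HS_extensional[OF \<psi>] by (simp add: \<gamma>_def extensional_restrict)
  ultimately have "connected_component HS \<psi> (\<gamma> 1)"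
    by (intro connected_componentI[OF connected_continuous_image[OF _ connected_Icc]]) force+
  then show ?thesis by (simp add: \<gamma>_def)
qed

lemma ccomp_HS_inter_Lk:
  assumes "S \<subseteq> set A"
  shows "ccomp HS \<inter> Lk G Gs A k = {C \<in> ccomp HS. oneT G \<in> Ek G k ` C}"
proof (intro equalityI subsetI)
  fix C assume "C \<in> ccomp HS \<inter> Lk G Gs A k"
  then show "C \<in> {C \<in> ccomp HS. oneT G \<in> Ek G k ` C}" unfolding Lk_def by blast
next
  fix C assume C: "C \<in> {C \<in> ccomp HS. oneT G \<in> Ek G k ` C}"
  then have "HS \<noteq> {}" unfolding ccomp_def by blast
  then have "C \<in> Lset G Gs A" using C assms unfolding Lset_def by blast
  then show "C \<in> ccomp HS \<inter> Lk G Gs A k" using C unfolding Lk_def by blast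
qed

end

locale annihilator_basis = annihilator +
  fixes e :: "nat \<Rightarrow> 'a" and s :: nat
  assumes basis: "basis_mod sat e s"
begin

lemma e_carrier: "e \<in> {..<s} \<rightarrow> carrier G"
  using basis by (simp add: basis_mod_def)

definition coord :: "'a \<Rightarrow> nat \<Rightarrow> int" where
  "coord x = (SOME c. x \<otimes> inv pow_prod e c {..<s} \<in> sat)"

definition retract :: "'a \<Rightarrow> 'a" where
  "retract x = x \<otimes> inv pow_prod e (coord x) {..<s}"

lemma retract_in_sat: "x \<in> carrier G \<Longrightarrow> retract x \<in> sat"
  using basis unfolding retract_def coord_def basis_mod_def by (metis someI_ex)

lemma retract_carrier: "x \<in> carrier G \<Longrightarrow> retract x \<in> carrier G"
  using retract_in_sat sat_carrier by blast

lemma retract_decomp: "x \<in> carrier G \<Longrightarrow> x = retract x \<otimes> pow_prod e (coord x) {..<s}"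
  using e_carrier by (simp add: retract_def m_assoc)

lemma coord_unique:
  assumes x: "x \<in> carrier G" and c: "x \<otimes> inv pow_prod e c {..<s} \<in> sat" and j: "j < s"
  shows "coord x j = c j"
  using indep_mod_unique[OF sat_subgroup _ e_carrier x retract_in_sat[OF x, unfolded retract_def] c] basis j
  by (simp add: basis_mod_def)

lemma coord_mult:
  assumes x: "x \<in> carrier G" and y: "y \<in> carrier G" and j: "j < s"
  shows "coord (x \<otimes> y) j = coord x j + coord y j"
proof (rule coord_unique[OF _ _ j])
  have "x \<otimes> y \<otimes> inv pow_prod e (\<lambda>j. coord x j + coord y j) {..<s} = retract x \<otimes> retract y"
    using x y e_carrier by (simp add: retract_def pow_prod_add inv_mult m_ac)
  then show "x \<otimes> y \<otimes> inv pow_prod e (\<lambda>j. coord x j + coord y j) {..<s} \<in> sat"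
    using retract_in_sat x y subgroup.m_closed[OF sat_subgroup] by simp
qed (use x y in simp)

lemma coord_sat: "t \<in> sat \<Longrightarrow> j < s \<Longrightarrow> coord t j = 0"
  using coord_unique[of t "\<lambda>j. 0"] sat_carrier by auto

lemma retract_sat: "t \<in> sat \<Longrightarrow> retract t = t"
  using coord_sat[of t] sat_carrier pow_prod_cong[OF e_carrier, of "coord t" "\<lambda>j. 0"]
  by (auto simp: retract_def)

lemma retract_mult:
  assumes "x \<in> carrier G" "y \<in> carrier G"
  shows "retract (x \<otimes> y) = retract x \<otimes> retract y"
proof -
  have "pow_prod e (coord (x \<otimes> y)) {..<s} = pow_prod e (\<lambda>j. coord x j + coord y j) {..<s}"
    using coord_mult[OF assms] by (intro pow_prod_cong[OF e_carrier]) simp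
  then show ?thesis
    using assms e_carrier by (simp add: retract_def pow_prod_add inv_mult m_ac)
qed

text \<open>Two characters agreeing on \<open>sat\<close> differ by a character of the free group \<open>G/sat\<close>,
  which is \<open>exp\<close> of an additive map obtained from logarithms of its values on the basis.\<close>
lemma same_component_if_eq_on_sat:
  assumes \<phi>: "\<phi> \<in> HS" and \<psi>: "\<psi> \<in> HS" and eq: "\<And>t. t \<in> sat \<Longrightarrow> \<phi> t = \<psi> t"
  shows "\<phi> \<in> connected_component_set HS \<psi>"
proof -
  interpret \<phi>: complex_character G \<phi> by (rule HS_character[OF \<phi>])
  interpret \<psi>: complex_character G \<psi> by (rule HS_character[OF \<psi>])
  define z where "z x = (\<Sum>j<s. of_int (coord x j) * (Ln (\<phi> (e j)) - Ln (\<psi> (e j))))" for x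
  have "(\<lambda>x\<in>carrier G. \<psi> x * exp (z x)) \<in> connected_component_set HS \<psi>"
  proof (rule HS_exp_twist_connected[OF \<psi>])
    fix x y assume "x \<in> carrier G" "y \<in> carrier G"
    then show "z (x \<otimes> y) = z x + z y"
      by (simp add: z_def coord_mult sum.distrib[symmetric] distrib_right)
  next
    fix x assume "x \<in> S"
    then show "z x = 0" using S_subset_N N_subset_sat coord_sat by (auto simp: z_def)
  next
    fix x assume "Gs = sphere 0 1"
    moreover have "e j \<in> carrier G" if "j < s" for j using e_carrier that by blast
    ultimately have "Re (Ln (\<phi> (e j))) = 0" "Re (Ln (\<psi> (e j))) = 0" if "j < s" for j
      using HS_values[OF \<phi>] HS_values[OF \<psi>] that \<phi>.char_nonzero \<psi>.char_nonzero
      by (simp_all add: Re_Ln)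
    then show "Re (z x) = 0" by (simp add: z_def Re_sum)
  qed
  moreover have "\<psi> x * exp (z x) = \<phi> x" if x: "x \<in> carrier G" for x
  proof -
    let ?P = "pow_prod e (coord x) {..<s}"
    have "exp (z x) = \<phi> ?P / \<psi> ?P" using e_carrier
      by (simp add: z_def right_diff_distrib sum_subtractf exp_diff \<phi>.exp_sum_Ln_char \<psi>.exp_sum_Ln_char)
    moreover have "\<phi> x = \<psi> (retract x) * \<phi> ?P" "\<psi> x = \<psi> (retract x) * \<psi> ?P"
      using retract_decomp[OF x] retract_carrier[OF x] e_carrier \<phi>.char_mult \<psi>.char_mult
        eq[OF retract_in_sat[OF x]] by (metis pow_prod_closed)+
    ultimately show ?thesis using \<psi>.char_nonzero[of ?P] e_carrier by simp
  qed
  then have "(\<lambda>x\<in>carrier G. \<psi> x * exp (z x)) = \<phi>"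
    using HS_extensional[OF \<phi>] by (simp add: extensional_restrict cong: restrict_cong)
  ultimately show ?thesis by simp
qed

end

section \<open>Components containing a point of order dividing \<open>k\<close>\<close>

locale annihilator_count = annihilator_basis +
  fixes k :: nat
  assumes k_pos: "k > 0"
begin

definition Hom :: "('a set \<Rightarrow> int) set" where
  "Hom = hom (tor_group (G Mod N)) (integer_mod_group k) \<inter> extensional (carrier (tor_group (G Mod N)))"

lemma Hom_iff: "\<xi> \<in> Hom \<longleftrightarrow> \<xi> \<in> extensional ((\<lambda>x. N #> x) ` sat) \<and>
    (\<forall>t\<in>sat. \<xi> (N #> t) \<in> {0..<int k}) \<and>
    (\<forall>t\<in>sat. \<forall>t'\<in>sat. \<xi> (N #> (t \<otimes> t')) = (\<xi> (N #> t) + \<xi> (N #> t')) mod int k)"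
  using k_pos sat_carrier
  by (auto simp: Hom_def hom_def tor_quotient_carrier tor_quotient_mult carrier_integer_mod_group
      rcos_N_mult subset_iff)

lemma Hom_N: "\<xi> \<in> Hom \<Longrightarrow> \<xi> N = 0"
proof -
  assume \<xi>: "\<xi> \<in> Hom"
  interpret Q: comm_group "G Mod N" by (rule abelian_FactGroup[OF N_subgroup])
  have "group (tor_group (G Mod N))"
    unfolding tor_group_def by (rule Q.group_subgroup_generated)
  then have "group_hom (tor_group (G Mod N)) (integer_mod_group k) \<xi>"
    using \<xi> unfolding Hom_def by (auto intro!: group_hom.intro simp: group_hom_axioms_def)
  then show ?thesis using group_hom.hom_one by (fastforce simp: tor_quotient_one)
qed

definition char_of :: "('a set \<Rightarrow> int) \<Rightarrow> 'a \<Rightarrow> complex" where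
  "char_of \<xi> = (\<lambda>x\<in>carrier G. unity_root k (\<xi> (N #> retract x)))"

lemma char_of_sat: "t \<in> sat \<Longrightarrow> char_of \<xi> t = unity_root k (\<xi> (N #> t))"
  using sat_carrier by (auto simp: char_of_def retract_sat)

lemma char_of_HS: "\<xi> \<in> Hom \<Longrightarrow> char_of \<xi> \<in> HS"
  unfolding char_of_def
proof (rule HS_memI)
  fix x assume "x \<in> carrier G"
  show "unity_root k (\<xi> (N #> retract x)) \<in> Gs"
    using Gs by (auto simp: norm_unity_root dest: arg_cong[of _ _ norm])
next
  fix x y assume "\<xi> \<in> Hom" "x \<in> carrier G" "y \<in> carrier G"
  then show "unity_root k (\<xi> (N #> retract (x \<otimes> y))) =
      unity_root k (\<xi> (N #> retract x)) * unity_root k (\<xi> (N #> retract y))"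
    using retract_in_sat k_pos by (simp add: Hom_iff retract_mult unity_root_mod unity_root_add)
next
  fix a assume "\<xi> \<in> Hom" "a \<in> S"
  then have "a \<in> N" "a \<in> sat" "a \<in> carrier G" using S_subset_N N_subset_sat S_carrier by auto
  then show "unity_root k (\<xi> (N #> retract a)) = 1"
    using Hom_N[OF \<open>\<xi> \<in> Hom\<close>] rcos_N_eq_N_iff[of a] by (simp add: retract_sat unity_root_def)
qed

lemma Ek_char_of: "Ek G (int k) (char_of \<xi>) = oneT G"
  unfolding Ek_def oneT_def using k_pos
  by (intro restrict_ext) (simp add: char_of_def unity_root_pow_eq_1)

definition component_of :: "('a set \<Rightarrow> int) \<Rightarrow> ('a \<Rightarrow> complex) set" where
  "component_of \<xi> = connected_component_set HS (char_of \<xi>)"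

lemma inj_on_component_of: "inj_on component_of Hom"
proof (rule inj_onI)
  fix \<xi>1 \<xi>2 assume \<xi>: "\<xi>1 \<in> Hom" "\<xi>2 \<in> Hom" and eq: "component_of \<xi>1 = component_of \<xi>2"
  have "char_of \<xi>2 \<in> connected_component_set HS (char_of \<xi>1)"
    using eq char_of_HS[OF \<xi>(2)] by (simp add: component_of_def)
  then have "unity_root k (\<xi>2 (N #> t)) = unity_root k (\<xi>1 (N #> t))" if "t \<in> sat" for t
    using component_eval_sat[OF _ that] char_of_sat[OF that] by metis
  then have "\<xi>1 (N #> t) = \<xi>2 (N #> t)" if "t \<in> sat" for t
    using inj_onD[OF bij_betw_imp_inj_on[OF bij_betw_unity_root[OF k_pos]]] \<xi> that
    by (metis Hom_iff)
  then show "\<xi>1 = \<xi>2" using \<xi> by (intro extensionalityI[of _ "(\<lambda>x. N #> x) ` sat"]) (auto simp: Hom_iff)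
qed

lemma exists_Hom_char_of_eq:
  assumes \<phi>: "\<phi> \<in> HS" and root: "\<And>t. t \<in> sat \<Longrightarrow> \<phi> t ^ k = 1"
  shows "\<exists>\<xi>\<in>Hom. \<forall>t\<in>sat. char_of \<xi> t = \<phi> t"
proof -
  interpret \<phi>: complex_character G \<phi> by (rule HS_character[OF \<phi>])
  let ?idx = "the_inv_into {0..<int k} (unity_root k)"
  have bij: "bij_betw (unity_root k) {0..<int k} {z. z ^ k = 1}" by (rule bij_betw_unity_root[OF k_pos])
  define \<xi> where "\<xi> = (\<lambda>U\<in>(\<lambda>x. N #> x) ` sat. ?idx (\<phi> (SOME t. t \<in> U)))"
  have \<xi>_rcos: "\<xi> (N #> t) = ?idx (\<phi> t)" if t: "t \<in> sat" for t
  proof -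
    have "t \<in> N #> t" using rcos_self[OF _ N_subgroup] t sat_carrier by blast
    then have "(SOME t'. t' \<in> N #> t) \<in> N #> t" by (rule someI)
    then show ?thesis using HS_rcos_const[OF \<phi>] t sat_carrier by (auto simp: \<xi>_def)
  qed
  have \<xi>_root: "unity_root k (\<xi> (N #> t)) = \<phi> t" "\<xi> (N #> t) \<in> {0..<int k}" if "t \<in> sat" for t
  proof -
    have img: "\<phi> t \<in> unity_root k ` {0..<int k}" using root[OF that] bij_betw_imp_surj_on[OF bij] by auto
    show "unity_root k (\<xi> (N #> t)) = \<phi> t"
      unfolding \<xi>_rcos[OF that] by (rule f_the_inv_into_f[OF bij_betw_imp_inj_on[OF bij] img])
    show "\<xi> (N #> t) \<in> {0..<int k}"
      unfolding \<xi>_rcos[OF that] by (rule the_inv_into_into[OF bij_betw_imp_inj_on[OF bij] img order_refl])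
  qed
  have "\<xi> \<in> Hom"
    unfolding Hom_iff
  proof (intro conjI ballI)
    show "\<xi> \<in> extensional ((\<lambda>x. N #> x) ` sat)" by (simp add: \<xi>_def)
  next
    fix t t' assume t: "t \<in> sat" "t' \<in> sat"
    then have tt': "t \<otimes> t' \<in> sat" using subgroup.m_closed[OF sat_subgroup] by blast
    let ?m = "(\<xi> (N #> t) + \<xi> (N #> t')) mod int k"
    have "unity_root k ?m = unity_root k (\<xi> (N #> t)) * unity_root k (\<xi> (N #> t'))"
      using k_pos by (simp add: unity_root_mod unity_root_add)
    also have "\<dots> = \<phi> (t \<otimes> t')"
      using t sat_carrier by (simp add: \<xi>_root \<phi>.char_mult subset_iff)
    finally have "?idx (\<phi> (t \<otimes> t')) = ?m"
      using the_inv_into_f_f[OF bij_betw_imp_inj_on[OF bij], of ?m] k_pos by simp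
    then show "\<xi> (N #> (t \<otimes> t')) = ?m" using \<xi>_rcos[OF tt'] by simp
  qed (use \<xi>_root in auto)
  then show ?thesis using \<xi>_root char_of_sat by auto
qed

lemma component_of_surj:
  assumes \<phi>: "\<phi> \<in> HS" and Ek: "Ek G (int k) \<phi> = oneT G"
  shows "\<exists>\<xi>\<in>Hom. component_of \<xi> = connected_component_set HS \<phi>"
proof -
  have "\<phi> t ^ k = 1" if "t \<in> sat" for t
    using fun_cong[OF Ek, of t] that sat_carrier by (auto simp: Ek_def oneT_def)
  then obtain \<xi> where \<xi>: "\<xi> \<in> Hom" "\<And>t. t \<in> sat \<Longrightarrow> char_of \<xi> t = \<phi> t"
    using exists_Hom_char_of_eq[OF \<phi>] by blast
  then have "\<phi> \<in> component_of \<xi>"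
    unfolding component_of_def using same_component_if_eq_on_sat[OF \<phi> char_of_HS[OF \<xi>(1)]] by simp
  then show ?thesis using \<xi>(1) connected_component_eq unfolding component_of_def by metis
qed

theorem bij_betw_component_of:
  "bij_betw component_of Hom {C \<in> ccomp HS. oneT G \<in> Ek G (int k) ` C}"
  unfolding bij_betw_def
proof (intro conjI inj_on_component_of equalityI subsetI)
  fix C assume "C \<in> component_of ` Hom"
  then obtain \<xi> where \<xi>: "\<xi> \<in> Hom" "C = component_of \<xi>" by blast
  have "C \<in> ccomp HS" unfolding ccomp_def \<xi>(2) component_of_def using char_of_HS[OF \<xi>(1)] by blast
  moreover have "char_of \<xi> \<in> C" using char_of_HS[OF \<xi>(1)] by (simp add: \<xi>(2) component_of_def)
  then have "oneT G \<in> Ek G (int k) ` C" using Ek_char_of by (metis image_eqI)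
  ultimately show "C \<in> {C \<in> ccomp HS. oneT G \<in> Ek G (int k) ` C}" by blast
next
  fix C assume "C \<in> {C \<in> ccomp HS. oneT G \<in> Ek G (int k) ` C}"
  then obtain \<phi> where C: "C \<in> ccomp HS" "\<phi> \<in> C" "Ek G (int k) \<phi> = oneT G" by auto
  then obtain \<psi> where "C = connected_component_set HS \<psi>" by (auto simp: ccomp_def)
  then have "C = connected_component_set HS \<phi>" "\<phi> \<in> HS"
    using C(2) connected_component_eq connected_component_subset by blast+
  then show "C \<in> component_of ` Hom" using component_of_surj[OF _ C(3)] by force
qed

end

theorem lemma4p6:
  fixes \<Gamma> :: "('a, 'b) monoid_scheme" and A :: "'a list" and Gs :: "complex set"
    and k :: nat and S :: "'a set"
  assumes "comm_group \<Gamma>" and "fin_gen_group \<Gamma>"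
    and "set A \<subseteq> carrier \<Gamma>"
    and "Gs = sphere 0 1 \<or> Gs = - {0}"
    and "k > 0"
    and "S \<subseteq> set A"
  shows "card (ccomp (Hset \<Gamma> Gs S) \<inter> Lk \<Gamma> Gs A (int k)) = mult_S \<Gamma> S k"
proof -
  interpret annihilator \<Gamma> S Gs
    using assms(1,3,4,6) by (simp add: annihilator_def annihilator_axioms_def subset_trans)
  obtain F where "finite F" "F \<subseteq> carrier \<Gamma>" "generate \<Gamma> F = carrier \<Gamma>"
    using assms(2) unfolding fin_gen_group_def by blast
  then have "\<exists>s e. basis_mod sat e s"
    by (rule torsion_free_quotient_has_basis[OF _ _ _ sat_subgroup sat_radical])
  then obtain e s where "basis_mod sat e s" by blast
  then interpret annihilator_count \<Gamma> S Gs e s k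
    using assms(5) by unfold_locales
  have "mult_S \<Gamma> S k = card Hom"
    unfolding mult_S_def Hom_def N_def ..
  then show ?thesis
    using ccomp_HS_inter_Lk[OF assms(6)] bij_betw_same_card[OF bij_betw_component_of] by simp
qed

end
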